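(* Let $X$ be any marked Dynkin diagram (not necessarily extensible) with $d$ nodes, and let $n\ge d$ be such that $\det(X_n)\ne0$. Then in $P(X_n)$, $$\overline{\omega}_i^{(n)}\equiv i\,\overline{\omega}_1^{(n)}\pmod{Q(X_n)}\quad\text{for }1\le i\le n-d+1.$$
   Context: A marked Dynkin diagram $X$ has nodes $1,\dots,d$ with node $d$ distinguished and symmetrizable generalized Cartan matrix $C(X)$. For $n\ge d$, $X_n$ is obtained by attaching a simply-laced chain of new nodes $d+1,\dots,n$ to node $d$ (so $C(X_n)$ has $C(X)$ as upper-left block, $2$ on the remaining diagonal, $-1$ in positions $(i,i+1),(i+1,i)$ for $d\le i<n$, $0$ elsewhere). $\det(X_n)$ is the determinant of $C(X_n)$. For the Kac–Moody algebra $\mathfrak g(X_n)$: simple roots $\alpha_i^{(n)}$, root lattice $Q(X_n)=\bigoplus\mathbb Z\alpha_i^{(n)}$, weight lattice $P(X_n)$, fundamental weights $\omega_i^{(n)}$, and $\overline{\omega}_i^{(n)}=\omega_{n-i+1}^{(n)}$. *)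

theory Defs
  imports Main "Jordan_Normal_Form.Determinant"
begin

text \<open>A marked Dynkin diagram X with d nodes is given by its generalized Cartan matrix
  X :: nat => nat => int, read on indices 1..d (node d is the marked node).
  Kac convention: X i j = <alpha_i^vee, alpha_j>.\<close>

definition sym_gcm :: "(nat \<Rightarrow> nat \<Rightarrow> int) \<Rightarrow> nat \<Rightarrow> bool" where
  "sym_gcm A m \<longleftrightarrow>
     (\<forall>i\<in>{1..m}. A i i = 2) \<and>
     (\<forall>i\<in>{1..m}. \<forall>j\<in>{1..m}. i \<noteq> j \<longrightarrow> A i j \<le> 0) \<and>
     (\<forall>i\<in>{1..m}. \<forall>j\<in>{1..m}. A i j = 0 \<longleftrightarrow> A j i = 0) \<and>
     (\<exists>D :: nat \<Rightarrow> rat. (\<forall>i\<in>{1..m}. D i > 0) \<and>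
        (\<forall>i\<in>{1..m}. \<forall>j\<in>{1..m}. D i * of_int (A i j) = D j * of_int (A j i)))"

text \<open>Cartan matrix of X_n: X as upper-left d x d block, a simply-laced chain d, d+1, ..., n.\<close>
definition cartanXn :: "(nat \<Rightarrow> nat \<Rightarrow> int) \<Rightarrow> nat \<Rightarrow> nat \<Rightarrow> nat \<Rightarrow> nat \<Rightarrow> int" where
  "cartanXn X d n i j =
     (if i \<le> d \<and> j \<le> d then X i j
      else if i = j then 2
      else if (d \<le> i \<and> j = i + 1) \<or> (d \<le> j \<and> i = j + 1) then -1
      else 0)"

text \<open>det(X_n) (matrix indices shifted to 0..n-1).\<close>
definition detXn :: "(nat \<Rightarrow> nat \<Rightarrow> int) \<Rightarrow> nat \<Rightarrow> nat \<Rightarrow> int" where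
  "detXn X d n = det (mat n n (\<lambda>(i, j). cartanXn X d n (i + 1) (j + 1)))"

text \<open>When det(X_n) is nonzero, the simple roots alpha_1..alpha_n form a basis of h^*.
  A weight is represented by its (rational) coordinates lambda k w.r.t. alpha_k (k = 1..n,
  zero elsewhere); the pairing with the coroot alpha_j^vee is sum_k a_jk lambda_k.\<close>
definition coroot_pair :: "(nat \<Rightarrow> nat \<Rightarrow> int) \<Rightarrow> nat \<Rightarrow> nat \<Rightarrow> nat \<Rightarrow> (nat \<Rightarrow> rat) \<Rightarrow> rat" where
  "coroot_pair X d n j w = (\<Sum>k=1..n. of_int (cartanXn X d n j k) * w k)"

definition is_weight_vec :: "nat \<Rightarrow> (nat \<Rightarrow> rat) \<Rightarrow> bool" where
  "is_weight_vec n w \<longleftrightarrow> (\<forall>k. k \<notin> {1..n} \<longrightarrow> w k = 0)"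

definition fund_weight :: "(nat \<Rightarrow> nat \<Rightarrow> int) \<Rightarrow> nat \<Rightarrow> nat \<Rightarrow> nat \<Rightarrow> (nat \<Rightarrow> rat)" where
  "fund_weight X d n i = (THE w. is_weight_vec n w \<and>
      (\<forall>j\<in>{1..n}. coroot_pair X d n j w = (if j = i then 1 else 0)))"

definition fund_weight_bar :: "(nat \<Rightarrow> nat \<Rightarrow> int) \<Rightarrow> nat \<Rightarrow> nat \<Rightarrow> nat \<Rightarrow> (nat \<Rightarrow> rat)" where
  "fund_weight_bar X d n i = fund_weight X d n (n - i + 1)"

definition in_root_lattice :: "nat \<Rightarrow> (nat \<Rightarrow> rat) \<Rightarrow> bool" where
  "in_root_lattice n w \<longleftrightarrow> is_weight_vec n w \<and> (\<forall>k. w k \<in> \<int>)"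

end

theory Submission
  imports Defs
begin

text \<open>Expanding a simple root in the basis of fundamental weights gives
  \<open>\<alpha>(k) = \<Sum>j. a(j,k) \<omega>(j)\<close>; at a chain node \<open>d < k \<le> n\<close> this reads
  \<open>\<alpha>(k) = 2\<omega>(k) - \<omega>(k-1) - \<omega>(k+1)\<close> with \<open>\<omega>(n+1) = 0\<close>. So in the reversed numbering the
  weights \<open>\<omega>bar(0) = 0, \<omega>bar(1), ..., \<omega>bar(n-d+1)\<close> have second differences in the root
  lattice, and a sequence starting at \<open>0\<close> with integral second differences is congruent to
  \<open>i\<close> times its first term.\<close>

lemma int_matrix_inverse:
  fixes A :: "nat \<Rightarrow> nat \<Rightarrow> int"
  assumes "det (mat n n (\<lambda>(i, j). A (i + 1) (j + 1))) \<noteq> 0"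
  obtains B :: "nat \<Rightarrow> nat \<Rightarrow> rat" where
    "\<And>i j. i \<in> {1..n} \<Longrightarrow> j \<in> {1..n} \<Longrightarrow>
       (\<Sum>k=1..n. of_int (A i k) * B k j) = (if i = j then 1 else 0)"
    "\<And>i j. i \<in> {1..n} \<Longrightarrow> j \<in> {1..n} \<Longrightarrow>
       (\<Sum>k=1..n. B i k * of_int (A k j)) = (if i = j then 1 else 0)"
proof -
  let ?A = "map_mat (of_int :: int \<Rightarrow> rat) (mat n n (\<lambda>(i, j). A (i + 1) (j + 1)))"
  have A_carrier: "?A \<in> carrier_mat n n" by simp
  from assms have "det ?A \<noteq> 0" by simp
  from det_non_zero_imp_unit[OF A_carrier this, of "()"]
  obtain M where M: "M \<in> carrier_mat n n" "M * ?A = 1\<^sub>m n" "?A * M = 1\<^sub>m n"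
    unfolding Units_def ring_mat_def by auto
  define B where "B = (\<lambda>i j. M $$ (i - 1, j - 1))"
  have shift: "(\<Sum>k=1..n. f k) = (\<Sum>k<n. f (k + 1))" for f :: "nat \<Rightarrow> rat"
    using sum.atLeast1_atMost_eq[of f n] by simp
  show thesis
  proof (rule that)
    fix i j assume i: "i \<in> {1..n}" and j: "j \<in> {1..n}"
    have "(?A * M) $$ (i - 1, j - 1) = (\<Sum>k<n. ?A $$ (i - 1, k) * M $$ (k, j - 1))"
      using i j M(1) by (auto simp: scalar_prod_def atLeast0LessThan intro!: sum.cong)
    also have "\<dots> = (\<Sum>k=1..n. of_int (A i k) * B k j)"
      unfolding shift B_def using i j by (auto intro!: sum.cong)
    finally show "(\<Sum>k=1..n. of_int (A i k) * B k j) = (if i = j then 1 else 0)"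
      using M(3) i j by (auto simp: le_imp_diff_is_add)
  next
    fix i j assume i: "i \<in> {1..n}" and j: "j \<in> {1..n}"
    have "(M * ?A) $$ (i - 1, j - 1) = (\<Sum>k<n. M $$ (i - 1, k) * ?A $$ (k, j - 1))"
      using i j M(1) by (auto simp: scalar_prod_def atLeast0LessThan intro!: sum.cong)
    also have "\<dots> = (\<Sum>k=1..n. B i k * of_int (A k j))"
      unfolding shift B_def using i j by (auto intro!: sum.cong)
    finally show "(\<Sum>k=1..n. B i k * of_int (A k j)) = (if i = j then 1 else 0)"
      using M(2) i j by (auto simp: le_imp_diff_is_add)
  qed
qed

text \<open>For \<open>i \<notin> {1..n}\<close> the defining conditions of \<open>fund_weight\<close> force the zero vector,
  so \<open>\<omega>\<^sub>n\<^sub>+\<^sub>1\<close> (and hence the \<open>0\<close>-th barred weight) is \<open>0\<close>.\<close>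

lemma fund_weight_eq_inverse_column:
  assumes AB: "\<And>i j. i \<in> {1..n} \<Longrightarrow> j \<in> {1..n} \<Longrightarrow>
      (\<Sum>k=1..n. of_int (cartanXn X d n i k) * B k j) = (if i = j then 1 else 0)"
    and BA: "\<And>i j. i \<in> {1..n} \<Longrightarrow> j \<in> {1..n} \<Longrightarrow>
      (\<Sum>k=1..n. B i k * of_int (cartanXn X d n k j)) = (if i = j then 1 else 0)"
  shows "fund_weight X d n i = (\<lambda>k. if i \<in> {1..n} \<and> k \<in> {1..n} then B k i else 0)"
    (is "_ = ?w")
  unfolding fund_weight_def
proof (rule the_equality)
  show "is_weight_vec n ?w \<and> (\<forall>j\<in>{1..n}. coroot_pair X d n j ?w = (if j = i then 1 else 0))"
  proof (intro conjI ballI)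
    show "is_weight_vec n ?w"
      unfolding is_weight_vec_def by simp
    fix j assume j: "j \<in> {1..n}"
    show "coroot_pair X d n j ?w = (if j = i then 1 else 0)"
    proof (cases "i \<in> {1..n}")
      case True
      have "coroot_pair X d n j ?w = (\<Sum>k=1..n. of_int (cartanXn X d n j k) * B k i)"
        unfolding coroot_pair_def using True by (intro sum.cong) auto
      then show ?thesis using AB[OF j True] by simp
    next
      case False
      then show ?thesis using j unfolding coroot_pair_def by auto
    qed
  qed
next
  fix w
  assume w: "is_weight_vec n w \<and> (\<forall>j\<in>{1..n}. coroot_pair X d n j w = (if j = i then 1 else 0))"
  show "w = ?w"
  proof
    fix m
    show "w m = ?w m"
    proof (cases "m \<in> {1..n}")
      case False
      then show ?thesis using w unfolding is_weight_vec_def by auto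
    next
      case m: True
      have "w m = (\<Sum>j=1..n. if m = j then w j else 0)"
        using m by simp
      also have "\<dots> = (\<Sum>j=1..n. (\<Sum>k=1..n. B m k * of_int (cartanXn X d n k j)) * w j)"
        using BA m by (intro sum.cong) auto
      also have "\<dots> = (\<Sum>k=1..n. B m k * coroot_pair X d n k w)"
        unfolding coroot_pair_def
        by (simp add: sum_distrib_left sum_distrib_right mult.assoc) (rule sum.swap)
      also have "\<dots> = (\<Sum>k=1..n. if k = i then B m k else 0)"
        using w by (intro sum.cong) auto
      finally show ?thesis using m by simp
    qed
  qed
qed

lemma cartanXn_inverse_fund_weight:
  assumes "detXn X d n \<noteq> 0"
  obtains B :: "nat \<Rightarrow> nat \<Rightarrow> rat" where
    "\<And>i j. i \<in> {1..n} \<Longrightarrow> j \<in> {1..n} \<Longrightarrow>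
       (\<Sum>k=1..n. B i k * of_int (cartanXn X d n k j)) = (if i = j then 1 else 0)"
    "\<And>i k. fund_weight X d n i k = (if i \<in> {1..n} \<and> k \<in> {1..n} then B k i else 0)"
proof -
  obtain B :: "nat \<Rightarrow> nat \<Rightarrow> rat" where
    AB: "\<And>i j. i \<in> {1..n} \<Longrightarrow> j \<in> {1..n} \<Longrightarrow>
       (\<Sum>k=1..n. of_int (cartanXn X d n i k) * B k j) = (if i = j then 1 else 0)" and
    BA: "\<And>i j. i \<in> {1..n} \<Longrightarrow> j \<in> {1..n} \<Longrightarrow>
       (\<Sum>k=1..n. B i k * of_int (cartanXn X d n k j)) = (if i = j then 1 else 0)"
    using int_matrix_inverse[OF assms[unfolded detXn_def]] by blast
  show thesis
    using that[OF BA] fund_weight_eq_inverse_column[OF AB BA] by simp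
qed

lemma fund_weight_eq_0:
  assumes "detXn X d n \<noteq> 0" and "i \<notin> {1..n} \<or> k \<notin> {1..n}"
  shows "fund_weight X d n i k = 0"
  using assms by (elim cartanXn_inverse_fund_weight) auto

lemma simple_root_eq_sum_fund_weight:
  assumes "detXn X d n \<noteq> 0" and k: "k \<in> {1..n}"
  shows "(\<Sum>j=1..n. of_int (cartanXn X d n j k) * fund_weight X d n j m) = (if m = k then 1 else 0)"
proof -
  obtain B where
    BA: "\<And>i j. i \<in> {1..n} \<Longrightarrow> j \<in> {1..n} \<Longrightarrow>
       (\<Sum>k=1..n. B i k * of_int (cartanXn X d n k j)) = (if i = j then 1 else 0)" and
    fund_weight: "\<And>i k. fund_weight X d n i k = (if i \<in> {1..n} \<and> k \<in> {1..n} then B k i else 0)"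
    using cartanXn_inverse_fund_weight[OF assms(1)] by blast
  show ?thesis
  proof (cases "m \<in> {1..n}")
    case True
    have "(\<Sum>j=1..n. of_int (cartanXn X d n j k) * fund_weight X d n j m)
        = (\<Sum>j=1..n. B m j * of_int (cartanXn X d n j k))"
      using True by (intro sum.cong) (auto simp: fund_weight)
    then show ?thesis using BA[OF True k] by simp
  next
    case False
    then have "fund_weight X d n j m = 0" for j
      unfolding fund_weight by auto
    then show ?thesis using False k by auto
  qed
qed

lemma cartanXn_chain_column_sum:
  fixes f :: "nat \<Rightarrow> rat"
  assumes "1 \<le> d" "d < k" "k \<le> n"
  shows "(\<Sum>j=1..n. of_int (cartanXn X d n j k) * f j)
       = 2 * f k - f (k - 1) - (if k < n then f (k + 1) else 0)"
proof -
  have "(\<Sum>j=1..n. of_int (cartanXn X d n j k) * f j) =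
     (\<Sum>j=1..n. (if j = k then 2 * f j else 0) + (if j = k - 1 then - f j else 0)
                + (if j = k + 1 then - f j else 0))"
    using assms by (intro sum.cong) (auto simp: cartanXn_def)
  also have "\<dots> = 2 * f k - f (k - 1) - (if k < n then f (k + 1) else 0)"
  proof -
    have "k - 1 \<in> {1..n}" "k \<in> {1..n}" "k + 1 \<in> {1..n} \<longleftrightarrow> k < n"
      using assms by auto
    then show ?thesis
      by (simp only: sum.distrib sum.delta' if_True) simp
  qed
  finally show ?thesis .
qed

lemma fund_weight_bar_second_difference:
  assumes "detXn X d n \<noteq> 0" and "1 \<le> d" and "i + 1 \<le> n - d"
  shows "fund_weight_bar X d n (i + 2) m - 2 * fund_weight_bar X d n (i + 1) m
           + fund_weight_bar X d n i m = - (if m = n - i then 1 else 0)"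
proof -
  define k where "k = n - i"
  have k: "d < k" "k \<le> n" using assms(2,3) unfolding k_def by auto
  have "2 * fund_weight X d n k m - fund_weight X d n (k - 1) m
          - (if k < n then fund_weight X d n (k + 1) m else 0) = (if m = k then 1 else 0)"
    using simple_root_eq_sum_fund_weight[OF assms(1), of k m] cartanXn_chain_column_sum[OF assms(2) k]
      k assms(2) by simp
  moreover have "fund_weight X d n (n + 1) m = 0"
    using fund_weight_eq_0[OF assms(1)] by simp
  moreover have "n - (i + 2) + 1 = k - 1" "n - (i + 1) + 1 = k" "n - i + 1 = k + 1"
    using k assms(2) unfolding k_def by auto
  ultimately show ?thesis
    unfolding fund_weight_bar_def k_def by (cases "i = 0") auto
qed

lemma Ints_sub_of_nat_mult_if_second_differences_Ints:
  fixes g :: "nat \<Rightarrow> 'a :: ring_1"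
  assumes "g 0 \<in> \<int>"
    and second_difference: "\<And>j. j + 2 \<le> N \<Longrightarrow> g (j + 2) - 2 * g (j + 1) + g j \<in> \<int>"
    and "i \<le> N"
  shows "g i - of_nat i * g 1 \<in> \<int>"
  using \<open>i \<le> N\<close>
proof (induction i rule: less_induct)
  case (less i)
  consider "i = 0" | "i = 1" | j where "i = j + 2"
    by (metis One_nat_def add_2_eq_Suc' not0_implies_Suc)
  then show ?case
  proof cases
    case 3
    have decompose: "g (j + 2) - of_nat (j + 2) * g 1
        = (g (j + 2) - 2 * g (j + 1) + g j) + 2 * (g (j + 1) - of_nat (j + 1) * g 1)
          - (g j - of_nat j * g 1)"
      by (simp add: algebra_simps mult_2)
    have "g (j + 1) - of_nat (j + 1) * g 1 \<in> \<int>" "g j - of_nat j * g 1 \<in> \<int>"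
      by (rule less.IH; use less.prems 3 in simp)+
    moreover have "g (j + 2) - 2 * g (j + 1) + g j \<in> \<int>"
      using second_difference less.prems 3 by simp
    ultimately show ?thesis
      unfolding 3 decompose by (meson Ints_diff Ints_add Ints_mult Ints_numeral)
  qed (use \<open>g 0 \<in> \<int>\<close> in auto)
qed

theorem lemma3p8:
  fixes X :: "nat \<Rightarrow> nat \<Rightarrow> int" and d n i :: nat
  assumes "1 \<le> d" and "sym_gcm X d" and "d \<le> n" and "detXn X d n \<noteq> 0"
    and "1 \<le> i" and "i \<le> n - d + 1"
  shows "in_root_lattice n
           (\<lambda>k. fund_weight_bar X d n i k - of_nat i * fund_weight_bar X d n 1 k)"
  unfolding in_root_lattice_def is_weight_vec_def
proof (intro conjI allI impI)
  fix k
  show "fund_weight_bar X d n i k - of_nat i * fund_weight_bar X d n 1 k = 0" if "k \<notin> {1..n}"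
    using fund_weight_eq_0[OF assms(4)] that unfolding fund_weight_bar_def by simp
  show "fund_weight_bar X d n i k - of_nat i * fund_weight_bar X d n 1 k \<in> \<int>"
  proof (rule Ints_sub_of_nat_mult_if_second_differences_Ints[where N = "n - d + 1"])
    show "fund_weight_bar X d n 0 k \<in> \<int>"
      using fund_weight_eq_0[OF assms(4)] unfolding fund_weight_bar_def by simp
    show "fund_weight_bar X d n (j + 2) k - 2 * fund_weight_bar X d n (j + 1) k
        + fund_weight_bar X d n j k \<in> \<int>" if "j + 2 \<le> n - d + 1" for j
      using fund_weight_bar_second_difference[OF assms(4,1), of j k] that by simp
  qed (fact assms(6))
qed

end
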